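(* Let $G,G'$ be finitely generated groups with neutral elements $o,o'$, equipped with word metrics $d,d'$ coming from Cayley graphs with respect to finite generating sets, let $0<c<\infty$, and equip $G'':=G\times G'$ with the metric $\rho_c((x,x'),(y,y')):=d(x,y)+d'(x',y')/c$ and origin $o'':=(o,o')$. Then the horocompactification of $(G'',\rho_c)$ is identified with $\overline G\times\overline{G'}$: precisely, the set of points of $\overline{G''}$ (viewed as functions on $G''$) is exactly the set of functions $d_{(u,u')}(y,y'):=d_u(y)+d_{u'}(y')/c$ with $u\in\overline G$ and $u'\in\overline{G'}$.
   Context: For a countable set $H$ with origin $o_H$ and a metric $\rho$ all of whose balls are finite: for $x\in H$ let $\rho_x(y):=\rho(x,y)-\rho(x,o_H)$. Identifying $x$ with $\rho_x$, the horocompactification $\overline H$ is the closure of $\{\rho_x: x\in H\}$ in the space of $1$-Lipschitz functions on $H$ vanishing at $o_H$, with pointwise convergence; $\partial H:=\overline H\setminus H$. Elements $u\in\overline G$ are regarded as functions $d_u$ on $G$ (with $d_u=d(u,\cdot)-d(u,o)$ when $u\in G$), and similarly for $G'$ with origin $o'$ and metric $d'$. *)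

theory Defs
  imports "HOL-Analysis.Analysis"
begin

text \<open>Groups are written additively via the (non-commutative) class group_add;
  the neutral element is 0.\<close>

definition generates :: "'a::group_add set \<Rightarrow> bool" where
  "generates S \<longleftrightarrow> (\<forall>g. \<exists>ws. set ws \<subseteq> S \<union> uminus ` S \<and> sum_list ws = g)"

definition word_dist :: "'a::group_add set \<Rightarrow> 'a \<Rightarrow> 'a \<Rightarrow> real" where
  "word_dist S x y = real (LEAST n. \<exists>ws. length ws = n \<and> set ws \<subseteq> S \<union> uminus ` S
                                        \<and> sum_list ws = - x + y)"

definition horofun :: "('a \<Rightarrow> 'a \<Rightarrow> real) \<Rightarrow> 'a \<Rightarrow> 'a \<Rightarrow> 'a \<Rightarrow> real" where
  "horofun \<rho> org x = (\<lambda>y. \<rho> x y - \<rho> x org)"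

text \<open>Horocompactification: closure of the horofunctions in the topology of pointwise
  convergence (product topology on functions).\<close>
definition horocompactification :: "('a \<Rightarrow> 'a \<Rightarrow> real) \<Rightarrow> 'a \<Rightarrow> ('a \<Rightarrow> real) set" where
  "horocompactification \<rho> org = closure (range (horofun \<rho> org))"

end

theory Submission
  imports Defs
begin

text \<open>The horofunction of \<open>(x, x')\<close> for \<open>\<rho>\<^sub>c\<close> is
  \<open>(y, y') \<mapsto> \<rho>\<^sub>x(y) + \<rho>'\<^sub>x\<^sub>'(y') / c\<close>, so the horofunctions of \<open>G''\<close> are the
  image of the pairs of horofunctions of \<open>G\<close> and \<open>G'\<close> under the continuous map
  \<open>\<Phi>(u, u') = u + u'/c\<close>. By the triangle inequality every horofunction satisfies
  \<open>-\<rho>(y, o) \<le> \<rho>\<^sub>x(y) \<le> \<rho>(o, y)\<close>, so by Tychonoff the closures of the sets of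
  horofunctions are compact. A continuous map \<open>f\<close> into the Hausdorff space of real functions
  satisfies \<open>closure (f A) = f (closure A)\<close> whenever \<open>closure A\<close> is compact;
  hence \<open>\<Phi>\<close> maps \<open>\<overline>G \<times> \<overline>G'\<close> exactly onto \<open>\<overline>G''\<close>.\<close>

lemma Hausdorff_space_fun_real: "Hausdorff_space (euclidean :: ('x \<Rightarrow> real) topology)"
  by (metis Hausdorff_space_euclidean Hausdorff_space_product_topology euclidean_product_topology)

lemma compact_imp_closed_fun_real: "compact (K :: ('x \<Rightarrow> real) set) \<Longrightarrow> closed K"
  by (metis closed_closedin compactin_euclidean_iff compactin_imp_closedin Hausdorff_space_fun_real)

lemma compact_Pi_atLeastAtMost: "compact (Pi UNIV (\<lambda>y. {a y .. b y}) :: ('x \<Rightarrow> real) set)"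
proof -
  have "compactin (product_topology (\<lambda>_. euclidean) UNIV) (PiE UNIV (\<lambda>y::'x. {a y .. b y :: real}))"
    by (simp add: compactin_PiE)
  then show ?thesis
    by (simp add: euclidean_product_topology PiE_UNIV_domain)
qed

lemma compact_closure_pointwise_bounded:
  fixes A :: "('x \<Rightarrow> real) set"
  assumes "\<And>f y. f \<in> A \<Longrightarrow> a y \<le> f y \<and> f y \<le> b y"
  shows "compact (closure A)"
proof -
  let ?K = "Pi UNIV (\<lambda>y. {a y .. b y}) :: ('x \<Rightarrow> real) set"
  have "A \<subseteq> ?K"
    using assms by auto
  then have "closure A \<subseteq> ?K"
    by (simp add: closure_minimal compact_Pi_atLeastAtMost compact_imp_closed_fun_real)
  then show ?thesis
    by (metis compact_Pi_atLeastAtMost closed_closure compact_Int_closed inf.absorb2)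
qed

lemma compact_horocompactification:
  assumes triangle: "\<And>x y z. \<rho> x z \<le> \<rho> x y + \<rho> y z"
  shows "compact (horocompactification \<rho> org)"
  unfolding horocompactification_def
proof (rule compact_closure_pointwise_bounded)
  fix f y assume "f \<in> range (horofun \<rho> org)"
  then obtain x where "f = horofun \<rho> org x" by blast
  then show "- \<rho> y org \<le> f y \<and> f y \<le> \<rho> org y"
    using triangle[of x org y] triangle[of x y org] by (simp add: horofun_def)
qed

lemma closure_continuous_image:
  fixes f :: "'a::topological_space \<Rightarrow> 'x \<Rightarrow> real"
  assumes cont: "continuous_on UNIV f" and "compact (closure A)"
  shows "closure (f ` A) = f ` closure A"
proof
  have "compact (f ` closure A)"
    using assms by (meson compact_continuous_image continuous_on_subset subset_UNIV)
  then show "closure (f ` A) \<subseteq> f ` closure A"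
    by (meson closure_minimal closure_subset compact_imp_closed_fun_real image_mono)
  show "f ` closure A \<subseteq> closure (f ` A)"
    using cont by (rule continuous_image_closure_subset) simp
qed

lemma word_dist_triangle:
  assumes "generates S"
  shows "word_dist S x z \<le> word_dist S x y + word_dist S y z"
proof -
  let ?T = "S \<union> uminus ` S"
  let ?P = "\<lambda>a n. \<exists>ws. length ws = n \<and> set ws \<subseteq> ?T \<and> sum_list ws = a"
  have shortest: "?P a (LEAST n. ?P a n)" for a
  proof (rule LeastI_ex)
    show "\<exists>n. ?P a n"
      using assms unfolding generates_def by blast
  qed
  obtain w1 where w1: "length w1 = (LEAST n. ?P (-x + y) n)" "set w1 \<subseteq> ?T" "sum_list w1 = -x + y"
    using shortest[of "-x + y"] by blast
  obtain w2 where w2: "length w2 = (LEAST n. ?P (-y + z) n)" "set w2 \<subseteq> ?T" "sum_list w2 = -y + z"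
    using shortest[of "-y + z"] by blast
  have "sum_list (w1 @ w2) = -x + z"
    using w1 w2 by (simp add: add.assoc[symmetric])
  then have "?P (-x + z) (length w1 + length w2)"
    using w1 w2 by (intro exI[of _ "w1 @ w2"]) auto
  then have "(LEAST n. ?P (-x + z) n) \<le> length w1 + length w2"
    by (rule Least_le)
  then show ?thesis
    using w1 w2 unfolding word_dist_def by simp
qed

lemma horofun_sum_metric:
  "horofun (\<lambda>p q. \<rho> (fst p) (fst q) + \<rho>' (snd p) (snd q) / c) (org, org')
     = (\<lambda>(u, v). \<lambda>(y, y'). u y + v y' / c) \<circ> map_prod (horofun \<rho> org) (horofun \<rho>' org')"
  by (simp add: horofun_def fun_eq_iff diff_divide_distrib)

lemma continuous_on_weighted_sum_fun:
  "continuous_on X (\<lambda>(u :: 'a \<Rightarrow> real, v :: 'b \<Rightarrow> real). \<lambda>(y, y'). u y + v y' / c)"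
proof (rule continuous_on_coordinatewise_then_product)
  fix p :: "'a \<times> 'b"
  have "continuous_on X (\<lambda>w. fst w (fst p))" "continuous_on X (\<lambda>w. snd w (snd p))"
    by (rule continuous_on_product_then_coordinatewise, rule continuous_on_fst continuous_on_snd,
        rule continuous_on_id)+
  then have "continuous_on X (\<lambda>w. fst w (fst p) + snd w (snd p) * inverse c)"
    by (intro continuous_on_add continuous_on_mult_right)
  then show "continuous_on X (\<lambda>w. (case w of (u, v) \<Rightarrow> \<lambda>(y, y'). u y + v y' / c) p)"
    by (simp add: case_prod_beta divide_inverse)
qed

lemma horocompactification_sum_metric:
  assumes "\<And>x y z. \<rho> x z \<le> \<rho> x y + \<rho> y z" and "\<And>x y z. \<rho>' x z \<le> \<rho>' x y + \<rho>' y z"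
  shows "horocompactification (\<lambda>p q. \<rho> (fst p) (fst q) + \<rho>' (snd p) (snd q) / c) (org, org')
    = (\<lambda>(u, v). \<lambda>(y, y'). u y + v y' / c) `
        (horocompactification \<rho> org \<times> horocompactification \<rho>' org')"
proof -
  let ?\<Phi> = "\<lambda>(u, v). \<lambda>(y, y'). u y + v y' / c"
  let ?A = "range (horofun \<rho> org) \<times> range (horofun \<rho>' org')"
  have closure_A: "closure ?A = horocompactification \<rho> org \<times> horocompactification \<rho>' org'"
    unfolding horocompactification_def by (rule closure_Times)
  have "range (horofun (\<lambda>p q. \<rho> (fst p) (fst q) + \<rho>' (snd p) (snd q) / c) (org, org')) = ?\<Phi> ` ?A"
    unfolding horofun_sum_metric image_comp[symmetric] UNIV_Times_UNIV[symmetric]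
    by (simp only: map_prod_surj_on)
  then have "horocompactification (\<lambda>p q. \<rho> (fst p) (fst q) + \<rho>' (snd p) (snd q) / c) (org, org')
      = closure (?\<Phi> ` ?A)"
    by (simp only: horocompactification_def)
  also have "\<dots> = ?\<Phi> ` closure ?A"
  proof (rule closure_continuous_image[OF continuous_on_weighted_sum_fun])
    show "compact (closure ?A)"
      unfolding closure_A using assms by (intro compact_Times compact_horocompactification)
  qed
  finally show ?thesis
    by (simp only: closure_A)
qed

theorem lemma2p2:
  fixes S :: "'a::group_add set" and S' :: "'b::group_add set" and c :: real
  assumes "finite S" "generates S" "finite S'" "generates S'" "0 < c"
  shows "horocompactification
           (\<lambda>p q. word_dist S (fst p) (fst q) + word_dist S' (snd p) (snd q) / c) (0, 0)
         = {(\<lambda>(y, y'). u y + u' y' / c) | u u'.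
              u \<in> horocompactification (word_dist S) 0 \<and>
              u' \<in> horocompactification (word_dist S') 0}"
proof -
  have "horocompactification
           (\<lambda>p q. word_dist S (fst p) (fst q) + word_dist S' (snd p) (snd q) / c) (0, 0)
      = (\<lambda>(u, v). \<lambda>(y, y'). u y + v y' / c) `
          (horocompactification (word_dist S) 0 \<times> horocompactification (word_dist S') 0)"
    using word_dist_triangle[OF assms(2)] word_dist_triangle[OF assms(4)]
    by (rule horocompactification_sum_metric)
  then show ?thesis
    by auto
qed

end
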